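(* Let $p,q\ge 1$ be coprime integers, $n=p+q$, and let $\mathsf{T}_c$ be the lower Christoffel word of length $n$ determined by $p$ and $q$. Then $\mathsf{SA}_{\mathsf{T}_c}$ is the arithmetically progressed permutation with first entry $\mathsf{SA}_{\mathsf{T}_c}[1]=1$ and ratio $k=q^{-1}$, the multiplicative inverse of $q$ modulo $n$. Equivalently, $\mathsf{T}_c$ equals the binary string $\mathsf{T}$ defined by $\mathsf{T}[i]=\mathtt{a}$ if $i\in\{P[1],\ldots,P[s]\}$ and $\mathtt{b}$ otherwise, where $P$ is that permutation and $s$ is the index with $P[s]=n-k$.
   Context: Alphabet $\{\mathtt{a}<\mathtt{b}\}$; lexicographic order with a proper prefix smaller than the longer string; suffix array $\mathsf{SA}_{\mathsf{T}}$: permutation of $[1..n]$ such that $\mathsf{T}[\mathsf{SA}_{\mathsf{T}}[i]..n]$ is the $i$-th smallest suffix. $x\bmod n$ denotes the representative of $x$ modulo $n$ in $[1..n]$; $x\operatorname{mod}_0 n$ denotes the representative in $[0..n-1]$. An arithmetically progressed permutation of length $n$ with ratio $k\in[1..n-1]$ is a permutation $P$ of $[1..n]$ with $P[i+1]=P[i]+k\bmod n$. Lower Christoffel word determined by coprime $p,q\ge1$: the string $\mathsf{T}_c$ of length $n=p+q$ with, for $i\in[1..n]$, $\mathsf{T}_c[i]=\mathtt{a}$ if $(i-1)q\operatorname{mod}_0 n< iq\operatorname{mod}_0 n$ and $\mathsf{T}_c[i]=\mathtt{b}$ otherwise. (Geometrically, this is the lattice path from $(0,0)$ to $(p,q)$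 with $\mathtt{a}$ = unit step right and $\mathtt{b}$ = unit step up, lying below the segment from $(0,0)$ to $(p,q)$ and enclosing with it no lattice points.) *)

theory Defs
  imports Main
begin

datatype letter = la | lb

(* strings are lists of letters; position i (1-based) of T is T ! (i - 1) *)

(* lexicographic order, proper prefix smaller than the longer string *)
definition lex_less :: "letter list \<Rightarrow> letter list \<Rightarrow> bool" where
  "lex_less xs ys \<longleftrightarrow> (xs, ys) \<in> lexord {(la, lb)}"

definition suffix_from :: "letter list \<Rightarrow> nat \<Rightarrow> letter list" where
  "suffix_from T i = drop (i - 1) T"

(* SA is a suffix array of T: a permutation of [1..n] (as a list, SA ! (i-1) = SA[i])
   listing the starting positions of suffixes in increasing lexicographic order *)
definition is_suffix_array :: "letter list \<Rightarrow> nat list \<Rightarrow> bool" where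
  "is_suffix_array T SA \<longleftrightarrow>
     length SA = length T \<and> set SA = {1..length T} \<and>
     (\<forall>i j. i < j \<and> j < length SA \<longrightarrow>
        lex_less (suffix_from T (SA ! i)) (suffix_from T (SA ! j)))"

definition suffix_array :: "letter list \<Rightarrow> nat list" where
  "suffix_array T = (THE SA. is_suffix_array T SA)"

definition mod1 :: "nat \<Rightarrow> nat \<Rightarrow> nat" where
  "mod1 x n = (if x mod n = 0 then n else x mod n)"

fun ap_seq :: "nat \<Rightarrow> nat \<Rightarrow> nat \<Rightarrow> nat \<Rightarrow> nat list" where
  "ap_seq n f k 0 = []"
| "ap_seq n f k (Suc m) = f # ap_seq n (mod1 (f + k) n) k m"

definition ap_perm :: "nat \<Rightarrow> nat \<Rightarrow> nat \<Rightarrow> nat list" where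
  "ap_perm n f k = ap_seq n f k n"

definition christoffel :: "nat \<Rightarrow> nat \<Rightarrow> letter list" where
  "christoffel p q = (let n = p + q in
     map (\<lambda>i. if ((i - 1) * q) mod n < (i * q) mod n then la else lb) [1..<n+1])"

end

theory Submission
  imports Defs
begin

(* Letter i (counted from 0) of the Christoffel word is a iff i q mod n < p, so the word codes
   the orbit of 0 under the rotation x -> x + q of Z/n with respect to the cut [0,p) | [p,n).
   The rotation preserves the order of two points lying in the same part, hence the suffix
   starting at i is lexicographically smaller than the one starting at j exactly when
   i q mod n < j q mod n.  As k is the inverse of q mod n, sorting the positions by this rank
   yields 1 + m k mod n for m = 0, ..., n - 1: the arithmetic progression of ratio k.  The
   letters a are the positions of rank below p, i.e. the first p entries of the permutation,
   and its p-th entry is n - k. *)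

lemma sorted_wrt_set_unique:
  assumes "sorted_wrt R xs" and "sorted_wrt R ys" and "set xs = set ys"
    and asym: "\<And>x y. R x y \<Longrightarrow> \<not> R y x"
  shows "xs = ys"
  using assms(1-3)
proof (induction xs arbitrary: ys)
  case Nil
  then show ?case by simp
next
  case (Cons x xs)
  then obtain y ys' where ys: "ys = y # ys'"
    by (cases ys) auto
  have "x = y"
  proof (rule ccontr)
    assume "x \<noteq> y"
    then have "R x y" and "R y x"
      using Cons.prems ys by (auto simp: insert_eq_iff)
    then show False using asym by blast
  qed
  moreover have "x \<notin> set xs" and "y \<notin> set ys'"
    using Cons.prems ys asym by (auto, blast)
  ultimately show ?case
    using Cons ys by (metis insert_eq_iff list.set(2) sorted_wrt.simps(2))
qed

lemma lex_less_asym: "lex_less xs ys \<Longrightarrow> \<not> lex_less ys xs"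
  unfolding lex_less_def by (rule lexord_asymmetric) (auto intro: asymI)

lemma suffix_array_eqI:
  assumes "is_suffix_array T SA"
  shows "suffix_array T = SA"
  unfolding suffix_array_def
proof (rule the_equality)
  show "is_suffix_array T SA" by (fact assms)
  fix SA' assume "is_suffix_array T SA'"
  with assms show "SA' = SA"
    by (intro sorted_wrt_set_unique[where R = "\<lambda>a b. lex_less (suffix_from T a) (suffix_from T b)"])
       (auto simp: is_suffix_array_def sorted_wrt_iff_nth_less lex_less_asym)
qed

lemma length_ap_seq [simp]: "length (ap_seq n f k l) = l"
  by (induction l arbitrary: f) auto

lemma length_ap_perm [simp]: "length (ap_perm n f k) = n"
  by (simp add: ap_perm_def)

lemma mod1_Suc: "0 < n \<Longrightarrow> mod1 (Suc x) n = Suc (x mod n)"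
  by (auto simp: mod1_def mod_Suc)

lemma nth_ap_seq_Suc:
  assumes "0 < n" and "r < n" and "m < l"
  shows "ap_seq n (Suc r) k l ! m = Suc ((r + m * k) mod n)"
  using assms(2,3)
proof (induction l arbitrary: r m)
  case 0
  then show ?case by simp
next
  case (Suc l)
  show ?case
  proof (cases m)
    case 0
    then show ?thesis using Suc.prems by simp
  next
    case (Suc m')
    with Suc.prems Suc.IH[of "(r + k) mod n" m'] \<open>0 < n\<close> show ?thesis
      by (simp add: mod1_Suc mod_add_left_eq add.assoc)
  qed
qed

lemma nth_ap_perm_one: "0 < n \<Longrightarrow> m < n \<Longrightarrow> ap_perm n 1 k ! m = Suc (m * k mod n)"
  using nth_ap_seq_Suc[of n 0 m n k] by (simp add: ap_perm_def)

context
  fixes n k q :: nat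
  assumes inverse: "k * q mod n = 1"
begin

lemma ap_perm_rank: "m < n \<Longrightarrow> (ap_perm n 1 k ! m - 1) * q mod n = m"
proof -
  assume "m < n"
  then have "(ap_perm n 1 k ! m - 1) * q mod n = (m * k mod n) * q mod n"
    using nth_ap_perm_one[of n m k] by simp
  also have "\<dots> = m * (k * q) mod n"
    by (simp add: mod_mult_left_eq mult.assoc)
  also have "\<dots> = m * (k * q mod n) mod n"
    by (simp add: mod_mult_right_eq)
  also have "\<dots> = m"
    using inverse \<open>m < n\<close> by simp
  finally show ?thesis .
qed

lemma ap_perm_nth_rank: "a \<in> {1..n} \<Longrightarrow> ap_perm n 1 k ! ((a - 1) * q mod n) = a"
proof -
  assume a: "a \<in> {1..n}"
  then have "ap_perm n 1 k ! ((a - 1) * q mod n) = Suc ((a - 1) * q mod n * k mod n)"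
    using nth_ap_perm_one[of n "(a - 1) * q mod n" k] by simp
  also have "\<dots> = Suc ((a - 1) * (k * q) mod n)"
    by (simp only: mod_mult_left_eq mult.assoc mult.commute[of q k])
  also have "\<dots> = Suc ((a - 1) * (k * q mod n) mod n)"
    by (simp add: mod_mult_right_eq)
  also have "\<dots> = a"
    using inverse a by auto
  finally show ?thesis .
qed

lemma set_ap_perm: "set (ap_perm n 1 k) = {1..n}"
proof (cases "n = 0")
  case True
  then show ?thesis by (simp add: ap_perm_def)
next
  case False
  then have "set (ap_perm n 1 k) \<subseteq> {1..n}"
    using nth_ap_perm_one[of n _ k] by (auto simp: in_set_conv_nth Suc_leI)
  moreover have "{1..n} \<subseteq> set (ap_perm n 1 k)"
    using ap_perm_nth_rank False by (force simp: in_set_conv_nth)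
  ultimately show ?thesis by blast
qed

lemma distinct_ap_perm: "distinct (ap_perm n 1 k)"
  by (metis ap_perm_rank distinct_conv_nth length_ap_perm)

lemma mem_ap_perm_prefix_iff:
  assumes "a \<in> {1..n}" and "l \<le> n"
  shows "a \<in> {ap_perm n 1 k ! (j - 1) | j. j \<in> {1..l}} \<longleftrightarrow> (a - 1) * q mod n < l"
proof
  assume "a \<in> {ap_perm n 1 k ! (j - 1) | j. j \<in> {1..l}}"
  then obtain j where "j \<in> {1..l}" and "a = ap_perm n 1 k ! (j - 1)" by blast
  then show "(a - 1) * q mod n < l"
    using ap_perm_rank[of "j - 1"] \<open>l \<le> n\<close> by auto
next
  assume "(a - 1) * q mod n < l"
  then show "a \<in> {ap_perm n 1 k ! (j - 1) | j. j \<in> {1..l}}"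
    using ap_perm_nth_rank[OF \<open>a \<in> {1..n}\<close>]
    by (intro CollectI exI[of _ "Suc ((a - 1) * q mod n)"]) auto
qed

end

lemma dvd_less_double_imp_eq:
  fixes m n :: nat
  assumes "n dvd m" and "0 < m" and "m < 2 * n"
  shows "m = n"
  using assms by auto

lemma nth_ap_perm_pred:
  assumes "0 < p" and "k < p + q" and inverse: "k * q mod (p + q) = 1"
  shows "ap_perm (p + q) 1 k ! (p - 1) = p + q - k"
proof -
  define x where "x = (p - 1) * k mod (p + q)"
  have "x < p + q"
    using assms by (simp add: x_def)
  have "(x + (k + 1)) mod (p + q) = ((p - 1) * k + (k + 1)) mod (p + q)"
    unfolding x_def by (rule mod_add_left_eq)
  also have "(p - 1) * k + (k + 1) = p * k + 1"
    using \<open>0 < p\<close> by (cases p) auto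
  also have "(p * k + 1) mod (p + q) = (p * k + k * q) mod (p + q)"
    using inverse mod_add_right_eq[of "p * k" "k * q" "p + q"] by simp
  also have "\<dots> = 0"
    by (simp add: mult.commute[of k q] flip: add_mult_distrib)
  finally have "(p + q) dvd (x + k + 1)"
    by (simp only: add.assoc mod_0_imp_dvd)
  moreover have "x + k + 1 < 2 * (p + q)"
    using \<open>x < p + q\<close> \<open>k < p + q\<close> by simp
  ultimately have "x + k + 1 = p + q"
    by (intro dvd_less_double_imp_eq) simp_all
  then show ?thesis
    using nth_ap_perm_one[of "p + q" "p - 1" k] assms by (simp add: x_def)
qed

definition christoffel_letter :: "nat \<Rightarrow> nat \<Rightarrow> nat \<Rightarrow> letter" where
  "christoffel_letter p q i = (if i * q mod (p + q) < p then la else lb)"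

lemma mod_add_right_cases:
  fixes x p q :: nat
  assumes "x < p + q"
  shows "(x + q) mod (p + q) = (if x < p then x + q else x - p)"
  using assms by (auto simp: mod_if)

lemma Suc_mult_mod: "Suc i * q mod n = (i * q mod n + q) mod (n::nat)"
  by (simp add: mod_add_right_eq add.commute)

lemma christoffel_conv_letter:
  assumes "0 < q"
  shows "christoffel p q = map (christoffel_letter p q) [0..<p + q]"
proof (rule nth_equalityI)
  show "length (christoffel p q) = length (map (christoffel_letter p q) [0..<p + q])"
    by (simp add: christoffel_def Let_def del: upt_Suc)
next
  fix i assume "i < length (christoffel p q)"
  then have i: "i < p + q" by (simp add: christoffel_def Let_def del: upt_Suc)
  define x where "x = i * q mod (p + q)"
  have "x < p + q"
    using assms by (simp add: x_def)
  have "christoffel p q ! i = (if x < (x + q) mod (p + q) then la else lb)"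
    using i Suc_mult_mod[of i q "p + q"] by (simp add: christoffel_def Let_def x_def del: upt_Suc)
  then show "christoffel p q ! i = map (christoffel_letter p q) [0..<p + q] ! i"
    using i assms mod_add_right_cases[OF \<open>x < p + q\<close>]
    by (auto simp: christoffel_letter_def simp flip: x_def)
qed

lemma mod_add_right_mono:
  fixes x y p q :: nat
  assumes "x < y" and "y < p + q" and "x < p \<longleftrightarrow> y < p"
  shows "(x + q) mod (p + q) < (y + q) mod (p + q)"
  using assms mod_add_right_cases[of x p q] mod_add_right_cases[of y p q] by auto

lemma lex_less_christoffel_letters:
  assumes "i \<le> p + q" and "j \<le> p + q" and "i * q mod (p + q) < j * q mod (p + q)"
  shows "lex_less (map (christoffel_letter p q) [i..<p + q]) (map (christoffel_letter p q) [j..<p + q])"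
  using assms
proof (induction "p + q - i" arbitrary: i j)
  case 0
  then have "i = p + q" by simp
  with 0 have "j < p + q" by (cases "j = p + q") auto
  then show ?case using \<open>i = p + q\<close> by (simp add: lex_less_def upt_conv_Cons)
next
  case (Suc d)
  have "i < p + q" using Suc by simp
  have "j < p + q" using Suc.prems by (cases "j = p + q") auto
  have "0 < p + q" using \<open>i < p + q\<close> by linarith
  let ?c = "christoffel_letter p q"
  have letters_Cons: "map ?c [i..<p + q] = ?c i # map ?c [Suc i..<p + q]"
    "map ?c [j..<p + q] = ?c j # map ?c [Suc j..<p + q]"
    using \<open>i < p + q\<close> \<open>j < p + q\<close> by (simp_all add: upt_conv_Cons)
  show ?case
  proof (cases "?c i = ?c j")
    case False
    then have "?c i = la" and "?c j = lb"
      using Suc.prems(3) by (auto simp: christoffel_letter_def split: if_splits)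
    then show ?thesis using letters_Cons by (simp add: lex_less_def)
  next
    case True
    have "(i * q mod (p + q) + q) mod (p + q) < (j * q mod (p + q) + q) mod (p + q)"
      using True Suc.prems(3) mod_less_divisor[OF \<open>0 < p + q\<close>, of "j * q"]
      by (intro mod_add_right_mono) (auto simp: christoffel_letter_def split: if_splits)
    then have "Suc i * q mod (p + q) < Suc j * q mod (p + q)"
      by (simp only: Suc_mult_mod)
    then have "lex_less (map ?c [Suc i..<p + q]) (map ?c [Suc j..<p + q])"
      using Suc.hyps(1)[of "Suc i" "Suc j"] Suc.hyps(2) \<open>i < p + q\<close> \<open>j < p + q\<close> by simp
    then show ?thesis using letters_Cons True by (simp add: lex_less_def)
  qed
qed

lemma lex_less_christoffel_suffix:
  assumes "0 < q" and "a \<in> {1..p + q}" and "b \<in> {1..p + q}"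
    and "(a - 1) * q mod (p + q) < (b - 1) * q mod (p + q)"
  shows "lex_less (suffix_from (christoffel p q) a) (suffix_from (christoffel p q) b)"
  using assms lex_less_christoffel_letters[of "a - 1" p q "b - 1"]
  by (auto simp: suffix_from_def christoffel_conv_letter drop_map)

lemma christoffel_suffix_array:
  assumes "0 < q" and inverse: "k * q mod (p + q) = 1"
  shows "is_suffix_array (christoffel p q) (ap_perm (p + q) 1 k)"
  unfolding is_suffix_array_def
proof (intro conjI allI impI)
  show "length (ap_perm (p + q) 1 k) = length (christoffel p q)"
    and "set (ap_perm (p + q) 1 k) = {1..length (christoffel p q)}"
    using set_ap_perm[OF inverse] by (simp_all add: christoffel_conv_letter[OF \<open>0 < q\<close>])
  fix i j assume "i < j \<and> j < length (ap_perm (p + q) 1 k)"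
  then show "lex_less (suffix_from (christoffel p q) (ap_perm (p + q) 1 k ! i))
                      (suffix_from (christoffel p q) (ap_perm (p + q) 1 k ! j))"
    using inverse set_ap_perm[OF inverse] ap_perm_rank[OF inverse]
    by (intro lex_less_christoffel_suffix \<open>0 < q\<close>) (auto simp flip: set_ap_perm)
qed

lemma christoffel_conv_ap_perm_prefix:
  assumes "0 < q" and inverse: "k * q mod (p + q) = 1"
  shows "christoffel p q =
    map (\<lambda>i. if i \<in> {ap_perm (p + q) 1 k ! (j - 1) | j. j \<in> {1..p}} then la else lb)
      [1..<p + q + 1]" (is "_ = map ?f _")
proof (rule nth_equalityI)
  show "length (christoffel p q) = length (map ?f [1..<p + q + 1])"
    using assms by (simp add: christoffel_conv_letter del: upt_Suc)
next
  fix i assume "i < length (christoffel p q)"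
  then have "i < p + q" using assms by (simp add: christoffel_conv_letter)
  then show "christoffel p q ! i = map ?f [1..<p + q + 1] ! i"
    using mem_ap_perm_prefix_iff[OF inverse, of "Suc i" p]
    by (simp add: christoffel_conv_letter[OF \<open>0 < q\<close>] christoffel_letter_def nth_upt del: upt_Suc)
qed

theorem theorem12:
  fixes p q k :: nat
  assumes "p \<ge> 1" and "q \<ge> 1" and "coprime p q"
    and "k \<in> {1..p + q - 1}" and "(k * q) mod (p + q) = 1"
  shows "suffix_array (christoffel p q) = ap_perm (p + q) 1 k
       \<and> (\<forall>s \<in> {1..p + q}. ap_perm (p + q) 1 k ! (s - 1) = p + q - k \<longrightarrow>
            christoffel p q =
              map (\<lambda>i. if i \<in> {ap_perm (p + q) 1 k ! (j - 1) | j. j \<in> {1..s}} then la else lb)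
                  [1..<p + q + 1])"
proof (intro conjI ballI impI)
  have "0 < p" and "0 < q" and "k < p + q" and inverse: "k * q mod (p + q) = 1"
    using assms by auto
  show "suffix_array (christoffel p q) = ap_perm (p + q) 1 k"
    using christoffel_suffix_array[OF \<open>0 < q\<close> inverse] by (rule suffix_array_eqI)
  fix s assume s: "s \<in> {1..p + q}" and "ap_perm (p + q) 1 k ! (s - 1) = p + q - k"
  then have "ap_perm (p + q) 1 k ! (s - 1) = ap_perm (p + q) 1 k ! (p - 1)"
    using nth_ap_perm_pred[OF \<open>0 < p\<close> \<open>k < p + q\<close> inverse] by simp
  then have "s - 1 = p - 1"
    using distinct_ap_perm[OF inverse] s \<open>0 < p\<close> by (auto simp: nth_eq_iff_index_eq)
  then have "s = p" using s \<open>0 < p\<close> by auto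
  then show "christoffel p q =
      map (\<lambda>i. if i \<in> {ap_perm (p + q) 1 k ! (j - 1) | j. j \<in> {1..s}} then la else lb)
        [1..<p + q + 1]"
    using christoffel_conv_ap_perm_prefix[OF \<open>0 < q\<close> inverse] by simp
qed

end
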